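(* Let $n\in\mathbb N$, let $p=p(n)$ satisfy $np\ge 10^4\log n$, and let $m=10\log(np)/p$. Let $W\subseteq[n]$ satisfy $|W|\ge 3n/8$. Then, with probability $1-o(n^{-2})$ (as $n\to\infty$), the random graph $G=G(n,p)$ contains a set $X\subseteq W$ with $|X|\le 8m$ such that every $U\subseteq V(G)\setminus X$ with $|U|\le m$ satisfies $|N(U,X)|\ge |U|$.
   Context: $G(n,p)$ is the binomial random graph on $[n]$. For $U\subseteq V(G)$, $N(U)=\big(\bigcup_{u\in U}N(u)\big)\setminus U$ and $N(U,X)=N(U)\cap X$. $\log$ is the natural logarithm. *)

theory Defs
  imports Complex_Main "HOL-Library.Landau_Symbols"
begin

text \<open>Graphs on the vertex set [n] = {1..n}, represented by their edge sets
  (sets of 2-element subsets of {1..n}).\<close>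

definition all_edges :: "nat \<Rightarrow> nat set set" where
  "all_edges n = {e. e \<subseteq> {1..n} \<and> card e = 2}"

definition gnp_prob :: "nat \<Rightarrow> real \<Rightarrow> (nat set set \<Rightarrow> bool) \<Rightarrow> real" where
  "gnp_prob n p P =
     (\<Sum>E\<in>{E. E \<subseteq> all_edges n \<and> P E}.
        p ^ card E * (1 - p) ^ (card (all_edges n) - card E))"

definition nbr :: "nat set set \<Rightarrow> nat \<Rightarrow> nat set" where
  "nbr E v = {u. {u, v} \<in> E}"

definition nbr_set :: "nat set set \<Rightarrow> nat set \<Rightarrow> nat set" where
  "nbr_set E U = (\<Union>u\<in>U. nbr E u) - U"

definition nbr_in :: "nat set set \<Rightarrow> nat set \<Rightarrow> nat set \<Rightarrow> nat set" where
  "nbr_in E U X = nbr_set E U \<inter> X"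

end

(* Fix X1 in W with |X1| = floor(7m) and call a vertex outside X1 poor if it has at most
   two neighbours in X1. Let X consist of X1 and the neighbours in W - X1 of the poor
   vertices. Writing d = np, with probability 1 - O(n^-3):
   - every degree is below k = ceil(9d) and fewer than b = ceil(n/d^3) vertices are poor,
     so |X| <= 7m + (b - 1) k <= 8m;
   - every set of at most m vertices outside X1, each with three neighbours in X1, has at
     least as many neighbours in X1;
   - every nonempty set of at most m vertices has at least as many neighbours in W - X1.
   A set U outside X with |U| <= m then splits into its poor part, whose neighbours in
   W - X1 lie in X, and the rest, which expands into X1; the two neighbourhoods are
   disjoint, so |N(U,X)| >= |U|. Each failure event is a union of explicit edge patterns,
   whose probability is bounded by a first-moment count. *)

theory Submission
  imports Defs "HOL-Library.FuncSet" "HOL-Real_Asymp.Real_Asymp"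
begin

section \<open>The probability space G(n,p)\<close>

definition gnp_weight :: "nat \<Rightarrow> real \<Rightarrow> nat set set \<Rightarrow> real" where
  "gnp_weight n p E = p ^ card E * (1 - p) ^ (card (all_edges n) - card E)"

lemma finite_all_edges: "finite (all_edges n)"
  by (rule finite_subset[of _ "Pow {1..n}"]) (auto simp: all_edges_def)

lemma gnp_weight_nonneg: "0 \<le> p \<Longrightarrow> p \<le> 1 \<Longrightarrow> 0 \<le> gnp_weight n p E"
  unfolding gnp_weight_def by simp

lemma gnp_prob_altdef:
  "gnp_prob n p P = (\<Sum>E\<in>Pow (all_edges n). if P E then gnp_weight n p E else 0)"
proof -
  have "{E. E \<subseteq> all_edges n \<and> P E} = {E \<in> Pow (all_edges n). P E}" by auto
  then have "gnp_prob n p P = (\<Sum>E\<in>{E \<in> Pow (all_edges n). P E}. gnp_weight n p E)"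
    unfolding gnp_prob_def gnp_weight_def by simp
  also have "\<dots> = (\<Sum>E\<in>Pow (all_edges n). if P E then gnp_weight n p E else 0)"
    by (rule sum.inter_filter) (simp add: finite_all_edges)
  finally show ?thesis .
qed

lemma gnp_prob_nonneg: "0 \<le> p \<Longrightarrow> p \<le> 1 \<Longrightarrow> 0 \<le> gnp_prob n p P"
  unfolding gnp_prob_altdef using gnp_weight_nonneg by (intro sum_nonneg) auto

lemma gnp_prob_mono:
  assumes "0 \<le> p" "p \<le> 1" "\<And>E. E \<subseteq> all_edges n \<Longrightarrow> P E \<Longrightarrow> Q E"
  shows "gnp_prob n p P \<le> gnp_prob n p Q"
  unfolding gnp_prob_altdef using assms gnp_weight_nonneg[OF assms(1,2)]
  by (intro sum_mono) auto

lemma gnp_prob_disj_le: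
  assumes "0 \<le> p" "p \<le> 1"
  shows "gnp_prob n p (\<lambda>E. P E \<or> Q E) \<le> gnp_prob n p P + gnp_prob n p Q"
  unfolding gnp_prob_altdef sum.distrib[symmetric] using gnp_weight_nonneg[OF assms]
  by (intro sum_mono) auto

lemma gnp_prob_Bex_le:
  assumes "0 \<le> p" "p \<le> 1" "finite I"
  shows "gnp_prob n p (\<lambda>E. \<exists>i\<in>I. P i E) \<le> (\<Sum>i\<in>I. gnp_prob n p (P i))"
proof -
  have "(if \<exists>i\<in>I. P i E then gnp_weight n p E else 0)
      \<le> (\<Sum>i\<in>I. if P i E then gnp_weight n p E else 0)" for E
  proof (cases "\<exists>i\<in>I. P i E")
    case True
    then obtain i where i: "i \<in> I" "P i E" by blast
    have "(if P i E then gnp_weight n p E else 0) \<le> (\<Sum>i\<in>I. if P i E then gnp_weight n p E else 0)"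
      by (rule member_le_sum) (use i assms gnp_weight_nonneg in auto)
    then show ?thesis using True i by simp
  qed (use assms gnp_weight_nonneg in \<open>auto intro: sum_nonneg\<close>)
  then have "gnp_prob n p (\<lambda>E. \<exists>i\<in>I. P i E)
      \<le> (\<Sum>E\<in>Pow (all_edges n). \<Sum>i\<in>I. if P i E then gnp_weight n p E else 0)"
    unfolding gnp_prob_altdef by (intro sum_mono)
  also have "\<dots> = (\<Sum>i\<in>I. gnp_prob n p (P i))"
    unfolding gnp_prob_altdef by (rule sum.swap)
  finally show ?thesis .
qed

definition edge_pattern :: "nat set set \<Rightarrow> nat set set \<Rightarrow> nat set set \<Rightarrow> bool" where
  "edge_pattern A B E \<longleftrightarrow> A \<subseteq> E \<and> B \<inter> E = {}"

lemma sum_Pow_power_card: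
  fixes a b :: "'a :: comm_semiring_1"
  assumes "finite C"
  shows "(\<Sum>F\<in>Pow C. a ^ card F * b ^ card (C - F)) = (a + b) ^ card C"
  using prod_add[OF assms, of "\<lambda>_. a" "\<lambda>_. b"] by simp

lemma gnp_prob_edge_pattern:
  assumes "A \<subseteq> all_edges n" "B \<subseteq> all_edges n" "A \<inter> B = {}"
  shows "gnp_prob n p (edge_pattern A B) = p ^ card A * (1 - p) ^ card B"
proof -
  define C where "C = all_edges n - A - B"
  have fin: "finite A" "finite B" "finite C"
    using assms finite_subset[OF _ finite_all_edges] finite_all_edges unfolding C_def by auto
  have patterns: "{E. E \<subseteq> all_edges n \<and> edge_pattern A B E} = (\<lambda>F. A \<union> F) ` Pow C"
    using assms unfolding C_def edge_pattern_def by (auto intro!: image_eqI[of _ _ "_ - A"])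
  have inj: "inj_on (\<lambda>F. A \<union> F) (Pow C)"
    by (intro inj_onI) (auto simp: C_def)
  have weight: "p ^ card (A \<union> F) * (1 - p) ^ (card (all_edges n) - card (A \<union> F))
      = (p ^ card A * (1 - p) ^ card B) * (p ^ card F * (1 - p) ^ card (C - F))"
    if "F \<subseteq> C" for F
  proof -
    have "finite F" using that fin(3) by (rule finite_subset)
    moreover have "A \<inter> F = {}" using that unfolding C_def by auto
    ultimately have "card (A \<union> F) = card A + card F" using fin by (simp add: card_Un_disjoint)
    moreover have "card (all_edges n) - card (A \<union> F) = card (all_edges n - (A \<union> F))"
      using that assms \<open>finite F\<close> fin by (intro card_Diff_subset[symmetric]) (auto simp: C_def)
    moreover have "all_edges n - (A \<union> F) = B \<union> (C - F)" "B \<inter> (C - F) = {}"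
      using assms that unfolding C_def by auto
    then have "card (all_edges n - (A \<union> F)) = card B + card (C - F)"
      using fin by (simp add: card_Un_disjoint)
    ultimately show ?thesis by (simp add: power_add)
  qed
  have "gnp_prob n p (edge_pattern A B)
      = (\<Sum>F\<in>Pow C. p ^ card (A \<union> F) * (1 - p) ^ (card (all_edges n) - card (A \<union> F)))"
    unfolding gnp_prob_def patterns sum.reindex[OF inj] o_def ..
  also have "\<dots> = (p ^ card A * (1 - p) ^ card B) * (\<Sum>F\<in>Pow C. p ^ card F * (1 - p) ^ card (C - F))"
    by (simp add: weight sum_distrib_left)
  also have "\<dots> = p ^ card A * (1 - p) ^ card B"
    by (simp add: sum_Pow_power_card fin)
  finally show ?thesis .
qed

lemma gnp_prob_edge_pattern_le:
  assumes "A \<subseteq> all_edges n" "B \<subseteq> all_edges n" "0 \<le> p" "p \<le> 1"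
  shows "gnp_prob n p (edge_pattern A B) \<le> p ^ card A * (1 - p) ^ card B"
proof (cases "A \<inter> B = {}")
  case True
  then show ?thesis using gnp_prob_edge_pattern assms by simp
next
  case False
  then have "gnp_prob n p (edge_pattern A B) = 0"
    unfolding gnp_prob_altdef edge_pattern_def by (intro sum.neutral) auto
  then show ?thesis using assms by simp
qed

lemma gnp_prob_not: "1 - gnp_prob n p P = gnp_prob n p (\<lambda>E. \<not> P E)"
proof -
  have "gnp_prob n p (edge_pattern {} {}) = 1"
    by (simp add: gnp_prob_edge_pattern)
  moreover have "edge_pattern {} {} = (\<lambda>E. True)"
    by (auto simp: edge_pattern_def)
  ultimately have "gnp_prob n p (\<lambda>E. True) = 1"
    by simp
  moreover have "gnp_prob n p P + gnp_prob n p (\<lambda>E. \<not> P E) = gnp_prob n p (\<lambda>E. True)"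
    unfolding gnp_prob_altdef sum.distrib[symmetric] by (intro sum.cong) auto
  ultimately show ?thesis by simp
qed

lemma gnp_prob_Bex_edge_pattern_le:
  assumes "0 \<le> p" "p \<le> 1" "finite I"
    "\<And>i. i \<in> I \<Longrightarrow> A i \<subseteq> all_edges n" "\<And>i. i \<in> I \<Longrightarrow> B i \<subseteq> all_edges n"
  shows "gnp_prob n p (\<lambda>E. \<exists>i\<in>I. edge_pattern (A i) (B i) E)
      \<le> (\<Sum>i\<in>I. p ^ card (A i) * (1 - p) ^ card (B i))"
proof -
  have "gnp_prob n p (\<lambda>E. \<exists>i\<in>I. edge_pattern (A i) (B i) E)
      \<le> (\<Sum>i\<in>I. gnp_prob n p (edge_pattern (A i) (B i)))"
    by (rule gnp_prob_Bex_le[OF assms(1-3)])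
  also have "\<dots> \<le> (\<Sum>i\<in>I. p ^ card (A i) * (1 - p) ^ card (B i))"
    using assms by (intro sum_mono gnp_prob_edge_pattern_le) auto
  finally show ?thesis .
qed

definition star_edges :: "nat set \<Rightarrow> (nat \<Rightarrow> nat set) \<Rightarrow> nat set set" where
  "star_edges V T = (\<lambda>(v, t). {v, t}) ` (SIGMA v:V. T v)"

lemma card_star_edges:
  assumes "finite V" "\<And>v. v \<in> V \<Longrightarrow> finite (T v)" "\<And>v. v \<in> V \<Longrightarrow> T v \<inter> V = {}"
  shows "card (star_edges V T) = (\<Sum>v\<in>V. card (T v))"
proof -
  have "inj_on (\<lambda>(v, t). {v, t}) (SIGMA v:V. T v)"
  proof (intro inj_onI, clarify)
    fix v t v' t'
    assume "v \<in> V" "t \<in> T v" "v' \<in> V" "t' \<in> T v'" "{v, t} = {v', t'}"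
    moreover from this have "t \<notin> V" "t' \<notin> V" using assms(3) by blast+
    ultimately show "v = v' \<and> t = t'" by (auto simp: doubleton_eq_iff)
  qed
  then have "card (star_edges V T) = card (SIGMA v:V. T v)"
    unfolding star_edges_def by (rule card_image)
  also have "\<dots> = (\<Sum>v\<in>V. card (T v))" using assms by (intro card_SigmaI) auto
  finally show ?thesis .
qed

lemma star_edges_subset_all_edges:
  assumes "V \<subseteq> {1..n}" "\<And>v. v \<in> V \<Longrightarrow> T v \<subseteq> {1..n}" "\<And>v. v \<in> V \<Longrightarrow> T v \<inter> V = {}"
  shows "star_edges V T \<subseteq> all_edges n"
proof
  fix e assume "e \<in> star_edges V T"
  then obtain v t where e: "e = {v, t}" "v \<in> V" "t \<in> T v" unfolding star_edges_def by auto
  then have "v \<noteq> t" "v \<in> {1..n}" "t \<in> {1..n}" using assms by blast+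
  then show "e \<in> all_edges n" using e unfolding all_edges_def by auto
qed

lemma star_edges_subset_iff: "star_edges V T \<subseteq> E \<longleftrightarrow> (\<forall>v\<in>V. \<forall>t\<in>T v. {v, t} \<in> E)"
  unfolding star_edges_def by auto

lemma star_edges_disjoint_iff:
  "star_edges V T \<inter> E = {} \<longleftrightarrow> (\<forall>v\<in>V. \<forall>t\<in>T v. {v, t} \<notin> E)"
  unfolding star_edges_def by auto

lemma nbr_subset: "E \<subseteq> all_edges n \<Longrightarrow> nbr E v \<subseteq> {1..n}"
  unfolding nbr_def all_edges_def by auto

lemma finite_nbr: "E \<subseteq> all_edges n \<Longrightarrow> finite (nbr E v)"
  by (meson finite_atLeastAtMost finite_subset nbr_subset)

lemma not_mem_nbr_self: "E \<subseteq> all_edges n \<Longrightarrow> v \<notin> nbr E v"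
  unfolding nbr_def all_edges_def by auto

lemma mem_nbr_iff: "t \<in> nbr E v \<longleftrightarrow> {v, t} \<in> E"
  unfolding nbr_def by (simp add: insert_commute)

lemma nbr_in_eq: "U \<inter> X = {} \<Longrightarrow> nbr_in E U X = (\<Union>v\<in>U. nbr E v) \<inter> X"
  unfolding nbr_in_def nbr_set_def by auto

lemma obtain_subset_between:
  assumes "finite A" "N \<subseteq> A" "card N \<le> j" "j \<le> card A"
  obtains S where "N \<subseteq> S" "S \<subseteq> A" "card S = j"
proof -
  have "finite N" using assms(1,2) by (rule finite_subset[rotated])
  then have "j - card N \<le> card (A - N)" using assms by (simp add: card_Diff_subset)
  then obtain R where R: "R \<subseteq> A - N" "card R = j - card N" "finite R"
    by (rule obtain_subset_with_card_n)
  then have "card (N \<union> R) = j" using \<open>finite N\<close> assms by (subst card_Un_disjoint) auto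
  then show ?thesis using that[of "N \<union> R"] R assms by auto
qed

section \<open>The deterministic construction of X\<close>

definition poor_vertices :: "nat \<Rightarrow> nat set set \<Rightarrow> nat set \<Rightarrow> nat set" where
  "poor_vertices n E X1 = {v \<in> {1..n} - X1. card (nbr E v \<inter> X1) \<le> 2}"

definition hall_set :: "nat \<Rightarrow> nat set set \<Rightarrow> nat set \<Rightarrow> real \<Rightarrow> nat set \<Rightarrow> bool" where
  "hall_set n E W m X \<longleftrightarrow> X \<subseteq> W \<and> real (card X) \<le> 8 * m \<and>
     (\<forall>U. U \<subseteq> {1..n} - X \<and> real (card U) \<le> m \<longrightarrow> card (nbr_in E U X) \<ge> card U)"

lemma card_le_nbr_in_Un:
  assumes "finite U" "U1 \<union> U2 = U" "U1 \<inter> U2 = {}"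
    and "finite Y1" "finite Y2" "Y1 \<inter> Y2 = {}" "U \<inter> (Y1 \<union> Y2) = {}"
    and "card U1 \<le> card ((\<Union>v\<in>U1. nbr E v) \<inter> Y1)" "card U2 \<le> card ((\<Union>v\<in>U2. nbr E v) \<inter> Y2)"
  shows "card U \<le> card (nbr_in E U (Y1 \<union> Y2))"
proof -
  let ?N1 = "(\<Union>v\<in>U1. nbr E v) \<inter> Y1" and ?N2 = "(\<Union>v\<in>U2. nbr E v) \<inter> Y2"
  have "card U = card U1 + card U2"
    using assms(1-3) by (metis card_Un_disjoint finite_Un)
  also have "\<dots> \<le> card ?N1 + card ?N2" using assms(8,9) by simp
  also have "\<dots> = card (?N1 \<union> ?N2)" using assms(4-6) by (intro card_Un_disjoint[symmetric]) auto
  also have "\<dots> \<le> card (nbr_in E U (Y1 \<union> Y2))"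
    unfolding nbr_in_eq[OF assms(7)] using assms(2,4,5) by (intro card_mono) auto
  finally show ?thesis .
qed

lemma card_Union_nbr_le:
  assumes "E \<subseteq> all_edges n" "finite B" "\<forall>v\<in>B. card (nbr E v) \<le> k"
  shows "card ((\<Union>v\<in>B. nbr E v) \<inter> Y) \<le> card B * k"
proof -
  have "card ((\<Union>v\<in>B. nbr E v) \<inter> Y) \<le> card (\<Union>v\<in>B. nbr E v)"
    using assms finite_nbr by (intro card_mono) auto
  also have "\<dots> \<le> (\<Sum>v\<in>B. card (nbr E v))" by (rule card_UN_le[OF assms(2)])
  also have "\<dots> \<le> card B * k" using assms(3) sum_bounded_above[of B "\<lambda>v. card (nbr E v)" k] by simp
  finally show ?thesis .
qed

lemma card_le_nbr_if_card_le_3: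
  assumes "finite Y" "card U \<le> 3" "\<forall>v\<in>U. 3 \<le> card (nbr E v \<inter> Y)"
  shows "card U \<le> card ((\<Union>v\<in>U. nbr E v) \<inter> Y)"
proof (cases "U = {}")
  case False
  then obtain v where "v \<in> U" by blast
  then have "3 \<le> card (nbr E v \<inter> Y)" using assms(3) by blast
  also have "\<dots> \<le> card ((\<Union>v\<in>U. nbr E v) \<inter> Y)" using \<open>v \<in> U\<close> assms(1) by (intro card_mono) auto
  finally show ?thesis using assms(2) by linarith
qed simp

lemma hall_set_exists:
  fixes m :: real
  assumes E: "E \<subseteq> all_edges n" and W: "W \<subseteq> {1..n}" and X1: "X1 \<subseteq> W"
    and degree: "\<forall>v\<in>{1..n}. card (nbr E v) \<le> k"
    and poor: "card (poor_vertices n E X1) \<le> \<beta>"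
    and rich_expands: "\<And>U. U \<subseteq> {1..n} - X1 \<Longrightarrow> \<forall>v\<in>U. 3 \<le> card (nbr E v \<inter> X1) \<Longrightarrow>
      4 \<le> card U \<Longrightarrow> real (card U) \<le> m \<Longrightarrow> card U \<le> card ((\<Union>v\<in>U. nbr E v) \<inter> X1)"
    and expands: "\<And>U. U \<subseteq> {1..n} \<Longrightarrow> U \<noteq> {} \<Longrightarrow> real (card U) \<le> m \<Longrightarrow>
      card U \<le> card ((\<Union>v\<in>U. nbr E v) \<inter> (W - X1))"
    and size: "real (card X1) + real \<beta> * real k \<le> 8 * m"
  shows "\<exists>X. hall_set n E W m X"
proof -
  define B where "B = poor_vertices n E X1"
  define Y where "Y = (\<Union>v\<in>B. nbr E v) \<inter> (W - X1)"
  have "finite W" using W by (rule finite_subset) simp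
  then have fin: "finite W" "finite X1" "finite B" "finite Y"
    using X1 by (auto simp: B_def Y_def poor_vertices_def intro: finite_subset)
  have "card Y \<le> card B * k"
    unfolding Y_def using E fin degree by (intro card_Union_nbr_le) (auto simp: B_def poor_vertices_def)
  then have "real (card Y) \<le> real \<beta> * real k"
    using poor unfolding B_def by (metis mult_le_mono1 of_nat_le_iff of_nat_mult order_trans)
  then have "real (card (X1 \<union> Y)) \<le> 8 * m"
    using size card_Un_le[of X1 Y] by linarith
  moreover have "card U \<le> card (nbr_in E U (X1 \<union> Y))"
    if U: "U \<subseteq> {1..n} - (X1 \<union> Y)" "real (card U) \<le> m" for U
  proof -
    have "finite U" using U finite_subset by blast
    then have small: "real (card V) \<le> m" if "V \<subseteq> U" for V
      using U(2) card_mono[OF _ that] by (meson of_nat_le_iff order_trans)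
    have rich: "card (U - B) \<le> card ((\<Union>v\<in>U - B. nbr E v) \<inter> X1)"
    proof (cases "4 \<le> card (U - B)")
      case True
      then show ?thesis
        using U small by (intro rich_expands) (auto simp: B_def poor_vertices_def)
    next
      case False
      then show ?thesis
        using U fin by (intro card_le_nbr_if_card_le_3) (auto simp: B_def poor_vertices_def)
    qed
    have "(\<Union>v\<in>U \<inter> B. nbr E v) \<inter> Y = (\<Union>v\<in>U \<inter> B. nbr E v) \<inter> (W - X1)"
      unfolding Y_def by auto
    then have poor: "card (U \<inter> B) \<le> card ((\<Union>v\<in>U \<inter> B. nbr E v) \<inter> Y)"
      using U small by (cases "U \<inter> B = {}") (auto intro!: expands)
    have "X1 \<inter> Y = {}" "U \<inter> (X1 \<union> Y) = {}" using U unfolding Y_def by auto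
    then show ?thesis
      using card_le_nbr_in_Un[OF \<open>finite U\<close> _ _ fin(2,4) _ _ rich poor] by blast
  qed
  moreover have "X1 \<union> Y \<subseteq> W" using X1 unfolding Y_def by auto
  ultimately show ?thesis unfolding hall_set_def by blast
qed

section \<open>The four failure events\<close>

definition high_degree :: "nat \<Rightarrow> nat \<Rightarrow> nat set set \<Rightarrow> bool" where
  "high_degree n k E \<longleftrightarrow> (\<exists>v\<in>{1..n}. \<exists>T\<in>{T. T \<subseteq> {1..n} - {v} \<and> card T = k}.
     edge_pattern (star_edges {v} (\<lambda>_. T)) {} E)"

lemma card_nbr_le_if_not_high_degree:
  assumes E: "E \<subseteq> all_edges n" and "\<not> high_degree n k E" and v: "v \<in> {1..n}"
  shows "card (nbr E v) \<le> k"
proof (rule ccontr)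
  assume "\<not> card (nbr E v) \<le> k"
  then obtain T where T: "T \<subseteq> nbr E v" "card T = k"
    by (meson nat_le_linear obtain_subset_with_card_n)
  then have "T \<subseteq> {1..n} - {v}" using nbr_subset[OF E] not_mem_nbr_self[OF E] by blast
  moreover have "edge_pattern (star_edges {v} (\<lambda>_. T)) {} E"
    unfolding edge_pattern_def star_edges_subset_iff using T mem_nbr_iff by blast
  ultimately have "high_degree n k E" unfolding high_degree_def using v T by blast
  with assms show False by simp
qed

lemma gnp_prob_high_degree_le:
  assumes p: "0 \<le> p" "p \<le> 1"
  shows "gnp_prob n p (high_degree n k) \<le> real n * real (n choose k) * p ^ k"
proof -
  let ?T = "\<lambda>v. {T. T \<subseteq> {1..n} - {v} \<and> card T = k}"
  have "gnp_prob n p (high_degree n k)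
      \<le> (\<Sum>v\<in>{1..n}. gnp_prob n p (\<lambda>E. \<exists>T\<in>?T v. edge_pattern (star_edges {v} (\<lambda>_. T)) {} E))"
    unfolding high_degree_def by (rule gnp_prob_Bex_le[OF p]) simp
  also have "\<dots> \<le> (\<Sum>v\<in>{1..n}. \<Sum>T\<in>?T v.
      p ^ card (star_edges {v} (\<lambda>_. T)) * (1 - p) ^ card ({} :: nat set set))"
    by (intro sum_mono gnp_prob_Bex_edge_pattern_le[OF p] star_edges_subset_all_edges) auto
  also have "\<dots> = (\<Sum>v\<in>{1..n}. real ((n - 1) choose k) * p ^ k)"
  proof (intro sum.cong refl)
    fix v assume v: "v \<in> {1..n}"
    have "card (star_edges {v} (\<lambda>_. T)) = k" if "T \<in> ?T v" for T
      using that finite_subset[of T "{1..n}"] by (subst card_star_edges) auto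
    moreover have "card ({1..n} - {v}) = n - 1" using v by simp
    ultimately show "(\<Sum>T\<in>?T v. p ^ card (star_edges {v} (\<lambda>_. T)) * (1 - p) ^ card ({} :: nat set set))
        = real ((n - 1) choose k) * p ^ k"
      by (simp add: n_subsets)
  qed
  also have "\<dots> \<le> (\<Sum>v\<in>{1..n}. real (n choose k) * p ^ k)"
    using p by (intro sum_mono mult_right_mono) (auto intro: binomial_right_mono)
  finally show ?thesis by simp
qed

definition many_poor :: "nat \<Rightarrow> nat set \<Rightarrow> nat \<Rightarrow> nat set set \<Rightarrow> bool" where
  "many_poor n X1 b E \<longleftrightarrow> (\<exists>B\<in>{B. B \<subseteq> {1..n} - X1 \<and> card B = b}.
     \<exists>T\<in>PiE B (\<lambda>_. {T. T \<subseteq> X1 \<and> card T \<le> 2}).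
       edge_pattern (star_edges B T) (star_edges B (\<lambda>v. X1 - T v)) E)"

lemma card_poor_vertices_less_if_not_many_poor:
  assumes "\<not> many_poor n X1 b E"
  shows "card (poor_vertices n E X1) < b"
proof (rule ccontr)
  assume "\<not> card (poor_vertices n E X1) < b"
  then obtain B where B: "B \<subseteq> poor_vertices n E X1" "card B = b"
    by (meson not_less obtain_subset_with_card_n)
  define T where "T = restrict (\<lambda>v. nbr E v \<inter> X1) B"
  have "T \<in> PiE B (\<lambda>_. {T. T \<subseteq> X1 \<and> card T \<le> 2})"
    using B unfolding T_def poor_vertices_def by auto
  moreover have "edge_pattern (star_edges B T) (star_edges B (\<lambda>v. X1 - T v)) E"
    unfolding edge_pattern_def star_edges_subset_iff star_edges_disjoint_iff T_def
    using mem_nbr_iff by auto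
  moreover have "B \<subseteq> {1..n} - X1" using B unfolding poor_vertices_def by auto
  ultimately have "many_poor n X1 b E" unfolding many_poor_def using B by blast
  with assms show False by simp
qed

definition poor_prob :: "real \<Rightarrow> nat set \<Rightarrow> real" where
  "poor_prob p S = (\<Sum>T | T \<subseteq> S \<and> card T \<le> 2. p ^ card T * (1 - p) ^ (card S - card T))"

lemma gnp_prob_poor_star_le:
  assumes p: "0 \<le> p" "p \<le> 1" and X1: "X1 \<subseteq> {1..n}" and B: "B \<subseteq> {1..n} - X1"
  shows "gnp_prob n p (\<lambda>E. \<exists>T\<in>PiE B (\<lambda>_. {T. T \<subseteq> X1 \<and> card T \<le> 2}).
      edge_pattern (star_edges B T) (star_edges B (\<lambda>v. X1 - T v)) E) \<le> poor_prob p X1 ^ card B"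
proof -
  let ?T = "{T. T \<subseteq> X1 \<and> card T \<le> 2}"
  have finX1: "finite X1" using X1 by (rule finite_subset) simp
  have finT: "finite ?T" using finX1 by simp
  have finB: "finite B" using B by (rule finite_subset) simp
  have "gnp_prob n p (\<lambda>E. \<exists>T\<in>PiE B (\<lambda>_. ?T).
      edge_pattern (star_edges B T) (star_edges B (\<lambda>v. X1 - T v)) E)
    \<le> (\<Sum>T\<in>PiE B (\<lambda>_. ?T). p ^ card (star_edges B T) * (1 - p) ^ card (star_edges B (\<lambda>v. X1 - T v)))"
  proof (rule gnp_prob_Bex_edge_pattern_le[OF p])
    show "finite (PiE B (\<lambda>_. ?T))" using finB finT by (intro finite_PiE) auto
    fix T assume "T \<in> PiE B (\<lambda>_. ?T)"
    then have "\<And>v. v \<in> B \<Longrightarrow> T v \<subseteq> X1" by auto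
    then show "star_edges B T \<subseteq> all_edges n" "star_edges B (\<lambda>v. X1 - T v) \<subseteq> all_edges n"
      using X1 B by (intro star_edges_subset_all_edges; blast)+
  qed
  also have "\<dots> = (\<Sum>T\<in>PiE B (\<lambda>_. ?T). \<Prod>v\<in>B. p ^ card (T v) * (1 - p) ^ (card X1 - card (T v)))"
  proof (intro sum.cong refl)
    fix T assume T: "T \<in> PiE B (\<lambda>_. ?T)"
    have sub: "T v \<subseteq> X1" if "v \<in> B" for v using T that by auto
    have "card (star_edges B T) = (\<Sum>v\<in>B. card (T v))"
      using B sub finite_subset[OF sub finX1] by (intro card_star_edges finB) auto
    moreover have "card (star_edges B (\<lambda>v. X1 - T v)) = (\<Sum>v\<in>B. card (X1 - T v))"
      using B finX1 by (intro card_star_edges finB) auto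
    moreover have "\<dots> = (\<Sum>v\<in>B. card X1 - card (T v))"
      using sub finite_subset[OF sub finX1] by (intro sum.cong refl card_Diff_subset) auto
    ultimately show "p ^ card (star_edges B T) * (1 - p) ^ card (star_edges B (\<lambda>v. X1 - T v))
        = (\<Prod>v\<in>B. p ^ card (T v) * (1 - p) ^ (card X1 - card (T v)))"
      by (simp only: power_sum prod.distrib)
  qed
  also have "\<dots> = (\<Prod>v\<in>B. poor_prob p X1)"
    unfolding poor_prob_def by (intro prod_sum_PiE[symmetric] finB finT)
  finally show ?thesis by simp
qed

lemma gnp_prob_many_poor_le:
  assumes p: "0 \<le> p" "p \<le> 1" and X1: "X1 \<subseteq> {1..n}"
  shows "gnp_prob n p (many_poor n X1 b) \<le> real (n choose b) * poor_prob p X1 ^ b"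
proof -
  let ?B = "{B. B \<subseteq> {1..n} - X1 \<and> card B = b}"
  have finX1: "finite X1" using X1 by (rule finite_subset) simp
  have "gnp_prob n p (many_poor n X1 b) \<le> (\<Sum>B\<in>?B. gnp_prob n p
      (\<lambda>E. \<exists>T\<in>PiE B (\<lambda>_. {T. T \<subseteq> X1 \<and> card T \<le> 2}).
        edge_pattern (star_edges B T) (star_edges B (\<lambda>v. X1 - T v)) E))"
    unfolding many_poor_def by (rule gnp_prob_Bex_le[OF p]) simp
  also have "\<dots> \<le> (\<Sum>B\<in>?B. poor_prob p X1 ^ b)"
    by (intro sum_mono) (use gnp_prob_poor_star_le[OF p X1] in auto)
  also have "\<dots> = real ((n - card X1) choose b) * poor_prob p X1 ^ b"
    using X1 finX1 by (simp add: n_subsets card_Diff_subset)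
  also have "\<dots> \<le> real (n choose b) * poor_prob p X1 ^ b"
    using p unfolding poor_prob_def
    by (intro mult_right_mono zero_le_power sum_nonneg) (auto intro: binomial_right_mono)
  finally show ?thesis .
qed

definition contracting_rich_set :: "nat \<Rightarrow> nat set \<Rightarrow> nat \<Rightarrow> nat set set \<Rightarrow> bool" where
  "contracting_rich_set n X1 M E \<longleftrightarrow> (\<exists>u\<in>{4..M}. \<exists>U\<in>{U. U \<subseteq> {1..n} - X1 \<and> card U = u}.
     \<exists>S\<in>{S. S \<subseteq> X1 \<and> card S = u - 1}. \<exists>T\<in>PiE U (\<lambda>_. {T. T \<subseteq> S \<and> card T = 3}).
       edge_pattern (star_edges U T) (star_edges U (\<lambda>_. X1 - S)) E)"

lemma obtain_neighbour_triples:
  assumes "\<forall>v\<in>U. 3 \<le> card (nbr E v \<inter> Y)"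
  obtains T where "T \<in> PiE U (\<lambda>v. {T. T \<subseteq> nbr E v \<inter> Y \<and> card T = 3})"
proof
  show "restrict (\<lambda>v. SOME T. T \<subseteq> nbr E v \<inter> Y \<and> card T = 3) U
      \<in> PiE U (\<lambda>v. {T. T \<subseteq> nbr E v \<inter> Y \<and> card T = 3})"
    unfolding restrict_PiE_iff
  proof (intro ballI CollectI)
    fix v assume "v \<in> U"
    then have "\<exists>T. T \<subseteq> nbr E v \<inter> Y \<and> card T = 3"
      using assms by (meson obtain_subset_with_card_n)
    then show "(SOME T. T \<subseteq> nbr E v \<inter> Y \<and> card T = 3) \<subseteq> nbr E v \<inter> Y \<and>
        card (SOME T. T \<subseteq> nbr E v \<inter> Y \<and> card T = 3) = 3" by (rule someI_ex)
  qed
qed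

lemma card_le_nbr_if_not_contracting_rich_set:
  assumes "\<not> contracting_rich_set n X1 M E"
    and X1: "X1 \<subseteq> {1..n}" "M \<le> card X1"
    and U: "U \<subseteq> {1..n} - X1" "\<forall>v\<in>U. 3 \<le> card (nbr E v \<inter> X1)" "4 \<le> card U" "card U \<le> M"
  shows "card U \<le> card ((\<Union>v\<in>U. nbr E v) \<inter> X1)"
proof (rule ccontr)
  define N where "N = (\<Union>v\<in>U. nbr E v) \<inter> X1"
  define u where "u = card U"
  assume "\<not> card U \<le> card ((\<Union>v\<in>U. nbr E v) \<inter> X1)"
  then have small: "card N \<le> u - 1" unfolding N_def u_def by simp
  have "finite X1" using X1(1) by (rule finite_subset) simp
  then obtain S where S: "N \<subseteq> S" "S \<subseteq> X1" "card S = u - 1"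
    by (rule obtain_subset_between[OF _ _ small]) (use X1 U in \<open>auto simp: N_def u_def\<close>)
  obtain T where "T \<in> PiE U (\<lambda>v. {T. T \<subseteq> nbr E v \<inter> X1 \<and> card T = 3})"
    using obtain_neighbour_triples[OF U(2)] .
  then have T: "T v \<subseteq> nbr E v \<inter> X1 \<and> card (T v) = 3" if "v \<in> U" for v
    using that by auto
  have "T v \<subseteq> S" if "v \<in> U" for v
    using T[OF that] S(1) that unfolding N_def by blast
  then have "T \<in> PiE U (\<lambda>_. {T. T \<subseteq> S \<and> card T = 3})"
    using T \<open>T \<in> PiE U _\<close> by (auto simp: PiE_iff)
  moreover have "edge_pattern (star_edges U T) (star_edges U (\<lambda>_. X1 - S)) E"
    unfolding edge_pattern_def star_edges_subset_iff star_edges_disjoint_iff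
  proof (intro conjI ballI)
    fix v t assume "v \<in> U" "t \<in> T v"
    then show "{v, t} \<in> E" using T mem_nbr_iff by blast
  next
    fix v t assume v: "v \<in> U" and t: "t \<in> X1 - S"
    show "{v, t} \<notin> E"
    proof
      assume "{v, t} \<in> E"
      then have "t \<in> N" using v t mem_nbr_iff unfolding N_def by blast
      then show False using S t by blast
    qed
  qed
  moreover have "u \<in> {4..M}" "U \<in> {U. U \<subseteq> {1..n} - X1 \<and> card U = u}"
    "S \<in> {S. S \<subseteq> X1 \<and> card S = u - 1}"
    using U S unfolding u_def by auto
  ultimately have "contracting_rich_set n X1 M E"
    unfolding contracting_rich_set_def by blast
  with assms show False by simp
qed

lemma gnp_prob_rich_star_le:
  assumes p: "0 \<le> p" "p \<le> 1" and X1: "X1 \<subseteq> {1..n}"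
    and U: "U \<subseteq> {1..n} - X1" "card U = u" and S: "S \<subseteq> X1" "card S = u - 1"
  shows "gnp_prob n p (\<lambda>E. \<exists>T\<in>PiE U (\<lambda>_. {T. T \<subseteq> S \<and> card T = 3}).
      edge_pattern (star_edges U T) (star_edges U (\<lambda>_. X1 - S)) E)
    \<le> real ((u - 1) choose 3) ^ u * (p ^ (3 * u) * (1 - p) ^ (u * (card X1 - (u - 1))))"
proof -
  let ?T = "{T. T \<subseteq> S \<and> card T = 3}"
  have fin: "finite X1" "finite U"
    using finite_subset[OF X1] finite_subset[OF U(1)] by auto
  have "finite S" using S(1) fin(1) by (rule finite_subset)
  have "gnp_prob n p (\<lambda>E. \<exists>T\<in>PiE U (\<lambda>_. ?T).
      edge_pattern (star_edges U T) (star_edges U (\<lambda>_. X1 - S)) E)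
    \<le> (\<Sum>T\<in>PiE U (\<lambda>_. ?T). p ^ card (star_edges U T) * (1 - p) ^ card (star_edges U (\<lambda>_. X1 - S)))"
  proof (rule gnp_prob_Bex_edge_pattern_le[OF p])
    show "finite (PiE U (\<lambda>_. ?T))" using fin \<open>finite S\<close> by (intro finite_PiE) auto
    fix T assume "T \<in> PiE U (\<lambda>_. ?T)"
    then have "\<And>v. v \<in> U \<Longrightarrow> T v \<subseteq> X1" using S by auto
    then show "star_edges U T \<subseteq> all_edges n" "star_edges U (\<lambda>_. X1 - S) \<subseteq> all_edges n"
      using X1 U by (intro star_edges_subset_all_edges; blast)+
  qed
  also have "\<dots> = (\<Sum>T\<in>PiE U (\<lambda>_. ?T). p ^ (3 * u) * (1 - p) ^ (u * (card X1 - (u - 1))))"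
  proof (intro sum.cong refl)
    fix T assume T: "T \<in> PiE U (\<lambda>_. ?T)"
    then have TS: "T v \<subseteq> S" "card (T v) = 3" if "v \<in> U" for v using that by auto
    have "card (star_edges U T) = (\<Sum>v\<in>U. card (T v))"
    proof (rule card_star_edges[OF fin(2)])
      fix v assume "v \<in> U"
      show "finite (T v)" using TS(1)[OF \<open>v \<in> U\<close>] \<open>finite S\<close> by (rule finite_subset)
      show "T v \<inter> U = {}" using TS(1)[OF \<open>v \<in> U\<close>] S(1) U(1) by blast
    qed
    also have "\<dots> = 3 * u" using TS U by simp
    finally have "card (star_edges U T) = 3 * u" .
    moreover have "card (star_edges U (\<lambda>_. X1 - S)) = (\<Sum>v\<in>U. card (X1 - S))"
      using U fin by (intro card_star_edges) auto
    then have "card (star_edges U (\<lambda>_. X1 - S)) = u * (card X1 - (u - 1))"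
      using U S \<open>finite S\<close> by (simp add: card_Diff_subset)
    ultimately show "p ^ card (star_edges U T) * (1 - p) ^ card (star_edges U (\<lambda>_. X1 - S))
        = p ^ (3 * u) * (1 - p) ^ (u * (card X1 - (u - 1)))" by simp
  qed
  also have "\<dots> = real ((u - 1) choose 3) ^ u * (p ^ (3 * u) * (1 - p) ^ (u * (card X1 - (u - 1))))"
    using fin \<open>finite S\<close> U S by (simp add: card_PiE n_subsets)
  finally show ?thesis .
qed

lemma gnp_prob_contracting_rich_set_le:
  assumes p: "0 \<le> p" "p \<le> 1" and X1: "X1 \<subseteq> {1..n}"
  shows "gnp_prob n p (contracting_rich_set n X1 M)
    \<le> (\<Sum>u\<in>{4..M}. real (n choose u) * real (card X1 choose (u - 1)) * real ((u - 1) choose 3) ^ u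
          * p ^ (3 * u) * (1 - p) ^ (u * (card X1 - (u - 1))))"
proof -
  let ?U = "\<lambda>u. {U. U \<subseteq> {1..n} - X1 \<and> card U = u}"
  let ?S = "\<lambda>u. {S. S \<subseteq> X1 \<and> card S = u - 1}"
  let ?c = "\<lambda>u. real ((u - 1) choose 3) ^ u * (p ^ (3 * u) * (1 - p) ^ (u * (card X1 - (u - 1))))"
  have finX1: "finite X1" using X1 by (rule finite_subset) simp
  have "gnp_prob n p (contracting_rich_set n X1 M) \<le> (\<Sum>u\<in>{4..M}. gnp_prob n p
      (\<lambda>E. \<exists>U\<in>?U u. \<exists>S\<in>?S u. \<exists>T\<in>PiE U (\<lambda>_. {T. T \<subseteq> S \<and> card T = 3}).
        edge_pattern (star_edges U T) (star_edges U (\<lambda>_. X1 - S)) E))"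
    unfolding contracting_rich_set_def by (rule gnp_prob_Bex_le[OF p]) simp
  also have "\<dots> \<le> (\<Sum>u\<in>{4..M}. \<Sum>U\<in>?U u. gnp_prob n p
      (\<lambda>E. \<exists>S\<in>?S u. \<exists>T\<in>PiE U (\<lambda>_. {T. T \<subseteq> S \<and> card T = 3}).
        edge_pattern (star_edges U T) (star_edges U (\<lambda>_. X1 - S)) E))"
    by (intro sum_mono gnp_prob_Bex_le[OF p]) simp
  also have "\<dots> \<le> (\<Sum>u\<in>{4..M}. \<Sum>U\<in>?U u. \<Sum>S\<in>?S u. ?c u)"
    using finX1
    by (intro sum_mono order.trans[OF gnp_prob_Bex_le[OF p]] gnp_prob_rich_star_le[OF p X1]) auto
  also have "\<dots> = (\<Sum>u\<in>{4..M}. real ((n - card X1) choose u) * (real (card X1 choose (u - 1)) * ?c u))"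
    using X1 finX1 by (simp add: n_subsets card_Diff_subset)
  also have "\<dots> \<le> (\<Sum>u\<in>{4..M}. real (n choose u) * (real (card X1 choose (u - 1)) * ?c u))"
    using p by (intro sum_mono mult_right_mono) (auto intro: binomial_right_mono)
  finally show ?thesis by (simp add: mult.assoc)
qed

(* Targets in U are excluded so that the forbidden edges are distinct and counted exactly. *)
definition contracting_set :: "nat \<Rightarrow> nat set \<Rightarrow> nat \<Rightarrow> nat set set \<Rightarrow> bool" where
  "contracting_set n Y M E \<longleftrightarrow> (\<exists>u\<in>{1..M}. \<exists>U\<in>{U. U \<subseteq> {1..n} \<and> card U = u}.
     \<exists>S\<in>{S. S \<subseteq> Y \<and> card S = u - 1}. edge_pattern {} (star_edges U (\<lambda>_. Y - S - U)) E)"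

lemma card_le_nbr_if_not_contracting_set:
  assumes "\<not> contracting_set n Y M E" and Y: "Y \<subseteq> {1..n}" "M \<le> card Y"
    and U: "U \<subseteq> {1..n}" "U \<noteq> {}" "card U \<le> M"
  shows "card U \<le> card ((\<Union>v\<in>U. nbr E v) \<inter> Y)"
proof (rule ccontr)
  define N where "N = (\<Union>v\<in>U. nbr E v) \<inter> Y"
  define u where "u = card U"
  assume "\<not> card U \<le> card ((\<Union>v\<in>U. nbr E v) \<inter> Y)"
  then have small: "card N \<le> u - 1" unfolding N_def u_def by simp
  have "finite Y" using Y(1) by (rule finite_subset) simp
  then obtain S where S: "N \<subseteq> S" "S \<subseteq> Y" "card S = u - 1"
    by (rule obtain_subset_between[OF _ _ small]) (use Y U in \<open>auto simp: N_def u_def\<close>)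
  have "edge_pattern {} (star_edges U (\<lambda>_. Y - S - U)) E"
    unfolding edge_pattern_def star_edges_disjoint_iff
  proof (intro conjI ballI)
    fix v t assume v: "v \<in> U" and t: "t \<in> Y - S - U"
    show "{v, t} \<notin> E"
    proof
      assume "{v, t} \<in> E"
      then have "t \<in> N" using v t mem_nbr_iff unfolding N_def by blast
      then show False using S t by blast
    qed
  qed simp
  moreover have "finite U" using U(1) by (rule finite_subset) simp
  then have "u \<in> {1..M}" using U unfolding u_def by (auto simp: Suc_le_eq card_gt_0_iff)
  moreover have "U \<in> {U. U \<subseteq> {1..n} \<and> card U = u}" "S \<in> {S. S \<subseteq> Y \<and> card S = u - 1}"
    using U S unfolding u_def by auto
  ultimately have "contracting_set n Y M E"
    unfolding contracting_set_def by blast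
  with assms show False by simp
qed

lemma gnp_prob_contracting_set_le:
  assumes p: "0 \<le> p" "p \<le> 1" and Y: "Y \<subseteq> {1..n}"
    and large: "\<And>u. u \<in> {1..M} \<Longrightarrow> c \<le> card Y - (u - 1) - u"
  shows "gnp_prob n p (contracting_set n Y M)
    \<le> (\<Sum>u\<in>{1..M}. real (n choose u) * real (card Y choose (u - 1)) * (1 - p) ^ (u * c))"
proof -
  let ?U = "\<lambda>u. {U. U \<subseteq> {1..n} \<and> card U = u}"
  let ?S = "\<lambda>u. {S. S \<subseteq> Y \<and> card S = u - 1}"
  have finY: "finite Y" using Y by (rule finite_subset) simp
  have "gnp_prob n p (contracting_set n Y M) \<le> (\<Sum>u\<in>{1..M}. gnp_prob n p
      (\<lambda>E. \<exists>U\<in>?U u. \<exists>S\<in>?S u. edge_pattern {} (star_edges U (\<lambda>_. Y - S - U)) E))"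
    unfolding contracting_set_def by (rule gnp_prob_Bex_le[OF p]) simp
  also have "\<dots> \<le> (\<Sum>u\<in>{1..M}. \<Sum>U\<in>?U u. gnp_prob n p
      (\<lambda>E. \<exists>S\<in>?S u. edge_pattern {} (star_edges U (\<lambda>_. Y - S - U)) E))"
    by (intro sum_mono gnp_prob_Bex_le[OF p]) simp
  also have "\<dots> \<le> (\<Sum>u\<in>{1..M}. \<Sum>U\<in>?U u. \<Sum>S\<in>?S u.
      p ^ card ({} :: nat set set) * (1 - p) ^ card (star_edges U (\<lambda>_. Y - S - U)))"
  proof (intro sum_mono gnp_prob_Bex_edge_pattern_le[OF p])
    fix u U S assume "U \<in> ?U u"
    then show "star_edges U (\<lambda>_. Y - S - U) \<subseteq> all_edges n"
      using Y by (intro star_edges_subset_all_edges) auto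
  qed (use finY in auto)
  also have "\<dots> \<le> (\<Sum>u\<in>{1..M}. \<Sum>U\<in>?U u. \<Sum>S\<in>?S u. (1 - p) ^ (u * c))"
  proof (intro sum_mono)
    fix u U S assume u: "u \<in> {1..M}" and U: "U \<in> ?U u" and S: "S \<in> ?S u"
    have "finite U" using U finite_subset[of U "{1..n}"] by auto
    then have "card (star_edges U (\<lambda>_. Y - S - U)) = u * card (Y - S - U)"
      using U finY by (subst card_star_edges) auto
    moreover have "card Y - card S - card U \<le> card (Y - S - U)"
      using diff_card_le_card_Diff[OF \<open>finite U\<close>, of "Y - S"]
        diff_card_le_card_Diff[OF finite_subset[of S Y], of Y] S finY by auto
    then have "c \<le> card (Y - S - U)" using large[OF u] U S by simp
    ultimately have "u * c \<le> card (star_edges U (\<lambda>_. Y - S - U))" by simp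
    then show "p ^ card ({} :: nat set set) * (1 - p) ^ card (star_edges U (\<lambda>_. Y - S - U))
        \<le> (1 - p) ^ (u * c)"
      using p by (simp add: power_decreasing)
  qed
  also have "\<dots> = (\<Sum>u\<in>{1..M}. real (n choose u) * real (card Y choose (u - 1)) * (1 - p) ^ (u * c))"
    using finY by (simp add: n_subsets mult.assoc)
  finally show ?thesis .
qed

lemma power_div_fact_le_exp:
  fixes x :: real
  assumes "0 \<le> x"
  shows "x ^ k / fact k \<le> exp x"
proof -
  have sums: "(\<lambda>n. x ^ n / fact n) sums exp x"
    using exp_converges[of x] by (simp add: divide_inverse mult.commute)
  have "(\<Sum>n\<in>{k}. x ^ n / fact n) \<le> suminf (\<lambda>n. x ^ n / fact n)"
    by (rule sum_le_suminf) (use sums assms in \<open>auto simp: sums_iff\<close>)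
  then show ?thesis using sums by (simp add: sums_iff)
qed

lemma exp_le_3_power: "exp (real k) \<le> 3 ^ k"
  using power_mono[OF exp_le, of k] by (simp add: exp_of_nat_mult[symmetric])

lemma power_div_fact_le_exp_power: "real n ^ k / fact k \<le> (exp 1 * real n / real k) ^ k"
proof (cases "k = 0")
  case False
  have "real n ^ k / fact k = (real n / real k) ^ k * (real k ^ k / fact k)"
    using False by (simp add: power_divide)
  also have "\<dots> \<le> (real n / real k) ^ k * exp (real k)"
    by (intro mult_left_mono power_div_fact_le_exp) auto
  also have "\<dots> = (exp 1 * real n / real k) ^ k"
    using exp_of_nat_mult[of k "1::real"] by (simp add: power_mult_distrib power_divide)
  finally show ?thesis .
qed simp

lemma binomial_le_exp_power: "real (n choose k) \<le> (exp 1 * real n / real k) ^ k"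
proof -
  have "real (n choose k) * fact k \<le> real n ^ k"
    using binomial_fact_pow[of n k] by (metis of_nat_fact of_nat_le_iff of_nat_mult of_nat_power)
  then have "real (n choose k) \<le> real n ^ k / fact k" by (simp add: field_simps)
  then show ?thesis using power_div_fact_le_exp_power by (rule order.trans)
qed

lemma binomial_pred_le_exp_power:
  assumes "u \<le> s"
  shows "real (s choose (u - 1)) \<le> (exp 1 * real s / real u) ^ u"
proof (cases "u = 0")
  case False
  have "real (s choose (u - 1)) * fact (u - 1) \<le> real s ^ (u - 1)"
    using binomial_fact_pow[of s "u - 1"] by (metis of_nat_fact of_nat_le_iff of_nat_mult of_nat_power)
  then have "real (s choose (u - 1)) \<le> real u * real s ^ (u - 1) / fact u"
    using False by (simp add: fact_reduce[of u] field_simps)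
  also have "\<dots> \<le> real s * real s ^ (u - 1) / fact u"
    using assms by (intro divide_right_mono mult_right_mono) auto
  also have "\<dots> = real s ^ u / fact u" using False by (simp flip: power_Suc)
  finally show ?thesis using power_div_fact_le_exp_power by (rule order.trans)
qed simp

lemma binomial_le_power: "real (n choose k) \<le> real n ^ k"
proof -
  have "n choose k \<le> (n choose k) * fact k" by simp
  also have "\<dots> \<le> n ^ k" by (rule binomial_fact_pow)
  finally show ?thesis by (metis of_nat_le_iff of_nat_power)
qed

lemma one_minus_power_le_exp:
  fixes p :: real
  assumes "0 \<le> p" "p \<le> 1"
  shows "(1 - p) ^ j \<le> exp (- (p * j))"
proof -
  have "(1 - p) ^ j \<le> exp (- p) ^ j"
    using assms exp_ge_add_one_self[of "- p"] by (intro power_mono) auto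
  then show ?thesis by (simp add: exp_of_nat_mult[symmetric] mult.commute)
qed

lemma exp_neg_le_inverse_power:
  assumes "0 < x" "real j * ln x \<le> a"
  shows "exp (- a) \<le> 1 / x ^ j"
proof -
  have "exp (- a) \<le> exp (- (real j * ln x))" using assms(2) by simp
  also have "\<dots> = 1 / x ^ j" using assms(1) by (simp add: exp_minus exp_of_nat_mult exp_ln field_simps)
  finally show ?thesis .
qed

lemma power_le_inverse_power_if_le_inverse:
  fixes A x :: real
  assumes "0 \<le> A" "A \<le> 1 / x" "1 \<le> x" "j \<le> u"
  shows "A ^ u \<le> 1 / x ^ j"
proof -
  have "A \<le> 1" using assms order.trans[of A "1 / x" 1] by simp
  then have "A ^ u \<le> A ^ j" using assms by (intro power_decreasing) auto
  also have "\<dots> \<le> (1 / x) ^ j" using assms by (intro power_mono) auto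
  finally show ?thesis by (simp add: power_one_over)
qed

lemma power_le_inverse_power_if_le_exp:
  fixes A x :: real
  assumes "0 \<le> A" "A \<le> exp (- real j)" "0 < x" "ln x \<le> real u"
  shows "A ^ u \<le> 1 / x ^ j"
proof -
  have "A ^ u \<le> exp (- real j) ^ u" using assms by (intro power_mono) auto
  also have "\<dots> = exp (- (real j * real u))" by (simp add: exp_of_nat_mult[symmetric] mult.commute)
  also have "\<dots> \<le> 1 / x ^ j" using assms by (intro exp_neg_le_inverse_power mult_left_mono) auto
  finally show ?thesis .
qed

lemma mult_power_le_power:
  fixes c d :: real
  assumes "1 \<le> d" "c \<le> d" "i < j"
  shows "c * d ^ i \<le> d ^ j"
proof -
  have "c * d ^ i \<le> d * d ^ i" using assms by (intro mult_right_mono) auto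
  also have "\<dots> = d ^ Suc i" by simp
  also have "\<dots> \<le> d ^ j" using assms by (intro power_increasing) auto
  finally show ?thesis .
qed

lemma poor_prob_le:
  assumes fin: "finite S" and p: "0 \<le> p" "p \<le> 1" and "1 \<le> real (card S) * p"
  shows "poor_prob p S \<le> 3 * (real (card S) * p) ^ 2 * (1 - p) ^ (card S - 2)"
proof -
  let ?T = "{T. T \<subseteq> S \<and> card T \<le> 2}"
  let ?x = "real (card S) * p"
  have "poor_prob p S \<le> (\<Sum>T\<in>?T. p ^ card T * (1 - p) ^ (card S - 2))"
    unfolding poor_prob_def using p by (intro sum_mono mult_left_mono power_decreasing) auto
  also have "\<dots> = (\<Sum>j\<le>2. \<Sum>T | T \<subseteq> S \<and> card T = j. p ^ card T) * (1 - p) ^ (card S - 2)"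
  proof -
    have "?T = (\<Union>j\<le>2. {T. T \<subseteq> S \<and> card T = j})" by auto
    then have "(\<Sum>T\<in>?T. p ^ card T) = (\<Sum>j\<le>2. \<Sum>T | T \<subseteq> S \<and> card T = j. p ^ card T)"
      using fin by (simp only:) (rule sum.UNION_disjoint, auto)
    then show ?thesis by (simp only: sum_distrib_right[symmetric])
  qed
  also have "\<dots> = (1 + ?x + real (card S choose 2) * p ^ 2) * (1 - p) ^ (card S - 2)"
    using fin by (simp add: n_subsets eval_nat_numeral)
  also have "\<dots> \<le> 3 * ?x ^ 2 * (1 - p) ^ (card S - 2)"
  proof (intro mult_right_mono)
    have "real (card S choose 2) * p ^ 2 \<le> real (card S) ^ 2 * p ^ 2"
      using p by (intro mult_right_mono binomial_le_power) auto
    moreover have "1 \<le> ?x ^ 2" "?x \<le> ?x ^ 2"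
      using assms(4) by (auto simp: power2_eq_square intro: order.trans[OF _ mult_left_mono[of 1 ?x ?x]])
    ultimately show "1 + ?x + real (card S choose 2) * p ^ 2 \<le> 3 * ?x ^ 2"
      by (simp add: power_mult_distrib)
  qed (use p in auto)
  finally show ?thesis .
qed

section \<open>Estimates in the regime np >= 10^4 log n\<close>

locale gnp_regime =
  fixes n :: nat and p :: real
  assumes p_le_1: "p \<le> 1"
    and np_large: "10^4 * ln (real n) \<le> real n * p"
    and ln_n_large: "10^4 \<le> ln (real n)"
begin

definition d :: real where "d = real n * p"
definition m :: real where "m = 10 * ln d / p"
definition M :: nat where "M = nat \<lfloor>m\<rfloor>"

lemma n_ge_1: "1 \<le> real n"
  using ln_n_large by (cases "n = 0") auto

lemma d_ge: "100000000 \<le> d"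
  using np_large ln_n_large unfolding d_def by simp

lemma d_pos: "0 < d"
  using d_ge by simp

lemma p_pos: "0 < p"
  using d_pos n_ge_1 unfolding d_def by (simp add: zero_less_mult_iff)

lemma ln_n_le_d: "10^4 * ln (real n) \<le> d"
  using np_large unfolding d_def .

lemma ln_d_ge_1: "1 \<le> ln d"
proof -
  have "exp 1 \<le> d" using exp_le d_ge by linarith
  then show ?thesis using d_pos by (metis ln_exp ln_le_cancel_iff exp_gt_zero)
qed

lemma ln_d_le: "5000 * ln d \<le> d"
proof -
  have "10^4 \<le> sqrt d" using d_ge real_le_rsqrt[of "10^4" d] by simp
  have "ln d = 2 * ln (sqrt d)" using d_pos by (simp add: ln_sqrt)
  also have "\<dots> \<le> 2 * sqrt d" using ln_le_minus_one[of "sqrt d"] d_pos by simp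
  finally have "5000 * ln d \<le> 10^4 * sqrt d" by simp
  also have "\<dots> \<le> sqrt d * sqrt d" using \<open>10^4 \<le> sqrt d\<close> d_pos by (intro mult_right_mono) auto
  finally show ?thesis using d_pos by simp
qed

lemma m_mult_p: "m * p = 10 * ln d"
  using p_pos unfolding m_def by simp

lemma m_ge_10: "10 \<le> m"
  using ln_d_ge_1 p_pos p_le_1 unfolding m_def by (simp add: field_simps)

lemma m_le: "m \<le> real n / 500"
proof -
  have "m * d = m * p * real n" unfolding d_def by simp
  also have "\<dots> = 10 * ln d * real n" unfolding m_mult_p ..
  also have "\<dots> \<le> d / 500 * real n" using ln_d_le n_ge_1 by (intro mult_right_mono) auto
  finally show ?thesis using d_pos by (simp add: field_simps)
qed

lemma le_M_iff: "j \<le> M \<longleftrightarrow> real j \<le> m"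
  unfolding M_def using m_ge_10 by (auto simp: le_nat_iff le_floor_iff)

lemma M_le_n: "M \<le> n"
  using le_M_iff[of M] m_le n_ge_1 by linarith

lemma sum_le_inverse_cube:
  assumes "1 \<le> j" "\<And>u. u \<in> {j..M} \<Longrightarrow> f u \<le> 1 / real n ^ 4"
  shows "(\<Sum>u\<in>{j..M}. f u) \<le> 1 / real n ^ 3"
proof -
  have "(\<Sum>u\<in>{j..M}. f u) \<le> real (card {j..M}) * (1 / real n ^ 4)"
    using assms(2) by (intro sum_bounded_above) auto
  also have "\<dots> \<le> real n * (1 / real n ^ 4)"
    using M_le_n assms(1) by (intro mult_right_mono) auto
  also have "\<dots> = 1 / real n ^ 3" using n_ge_1 by (simp add: field_simps eval_nat_numeral)
  finally show ?thesis .
qed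

definition k :: nat where "k = nat \<lceil>9 * d\<rceil>"

lemma gnp_prob_high_degree_small: "gnp_prob n p (high_degree n k) \<le> 1 / real n ^ 4"
proof -
  have k: "9 * d \<le> real k" unfolding k_def by linarith
  then have "0 < real k" using d_pos by linarith
  have "real (n choose k) * p ^ k \<le> (exp 1 * real n / real k) ^ k * p ^ k"
    using p_pos by (intro mult_right_mono binomial_le_exp_power) auto
  also have "\<dots> = (exp 1 * (d / real k)) ^ k"
    unfolding power_mult_distrib[symmetric] d_def by (simp add: field_simps)
  also have "\<dots> \<le> (3 * (1 / 9)) ^ k"
  proof (intro power_mono mult_mono)
    show "d / real k \<le> 1 / 9" using k \<open>0 < real k\<close> by (simp add: field_simps)
  qed (use exp_le d_pos \<open>0 < real k\<close> in auto)
  also have "\<dots> = 1 / 3 ^ k" by (simp add: power_one_over)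
  also have "\<dots> \<le> exp (- real k)"
    using exp_le_3_power[of k] by (simp add: exp_minus field_simps)
  also have "\<dots> \<le> 1 / real n ^ 5"
    using k ln_n_le_d n_ge_1 by (intro exp_neg_le_inverse_power) auto
  finally have "real n * (real (n choose k) * p ^ k) \<le> real n * (1 / real n ^ 5)"
    using n_ge_1 by (intro mult_left_mono) auto
  also have "\<dots> = 1 / real n ^ 4" using n_ge_1 by (simp add: field_simps eval_nat_numeral)
  finally show ?thesis
    using gnp_prob_high_degree_le[OF less_imp_le[OF p_pos] p_le_1, of n k] by (simp add: mult.assoc)
qed

end

locale gnp_core = gnp_regime +
  fixes W X1 :: "nat set"
  assumes W_sub: "W \<subseteq> {1..n}" and card_W: "3 * real n / 8 \<le> real (card W)"
    and X1_sub: "X1 \<subseteq> W" and card_X1: "card X1 = nat \<lfloor>7 * m\<rfloor>"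
begin

definition b :: nat where "b = nat \<lceil>real n / d ^ 3\<rceil>"

lemma X1_subset: "X1 \<subseteq> {1..n}"
  using X1_sub W_sub by auto

lemma finite_W: "finite W"
  using W_sub by (rule finite_subset) simp

lemma card_X1_bounds: "7 * m - 1 < real (card X1)" "real (card X1) \<le> 7 * m"
  unfolding card_X1 using m_ge_10 by linarith+

lemma M_le_card_X1: "M \<le> card X1"
  using le_M_iff[of M] card_X1_bounds m_ge_10 by linarith

lemma card_rest: "3 * real n / 8 - 7 * m \<le> real (card (W - X1))"
proof -
  have "card (W - X1) = card W - card X1"
    using X1_sub finite_W by (simp add: card_Diff_subset finite_subset)
  moreover have "card X1 \<le> card W" using X1_sub finite_W by (rule card_mono[rotated])
  ultimately show ?thesis using card_W card_X1_bounds by (simp add: of_nat_diff)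
qed

lemma M_le_card_rest: "M \<le> card (W - X1)"
  using le_M_iff[of M] card_rest m_le m_ge_10 by linarith

lemma hall_size_bound: "real (card X1) + real (b - 1) * real k \<le> 8 * m"
proof -
  have pos: "0 < real n / d ^ 3" using n_ge_1 d_pos by simp
  then have b: "real b = of_int \<lceil>real n / d ^ 3\<rceil>" unfolding b_def by simp
  then have "1 \<le> b" using pos by linarith
  then have "real (b - 1) \<le> real n / d ^ 3"
    using b ceiling_correct[of "real n / d ^ 3"] by (simp add: of_nat_diff)
  moreover have "real k \<le> 10 * d" unfolding k_def using d_ge by linarith
  ultimately have "real (b - 1) * real k \<le> real n / d ^ 3 * (10 * d)"
    by (intro mult_mono) auto
  also have "\<dots> = 10 * real n / d ^ 2" using d_pos by (simp add: field_simps power2_eq_square eval_nat_numeral)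
  also have "\<dots> \<le> 10 * real n * ln d / d"
  proof -
    have "1 * 1 \<le> d * ln d" using ln_d_ge_1 d_ge by (intro mult_mono) auto
    then show ?thesis using d_pos n_ge_1 by (simp add: field_simps power2_eq_square)
  qed
  also have "\<dots> = m" unfolding m_def d_def using n_ge_1 by (simp add: field_simps)
  finally show ?thesis using card_X1_bounds by simp
qed

lemma bad_event_if_no_hall_set:
  assumes E: "E \<subseteq> all_edges n" and no_hall: "\<not> (\<exists>X. hall_set n E W m X)"
  shows "high_degree n k E \<or> many_poor n X1 b E \<or> contracting_rich_set n X1 M E \<or>
    contracting_set n (W - X1) M E"
proof (rule ccontr)
  assume "\<not> ?thesis"
  then have not_bad: "\<not> high_degree n k E" "\<not> many_poor n X1 b E"
    "\<not> contracting_rich_set n X1 M E" "\<not> contracting_set n (W - X1) M E" by auto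
  have "\<exists>X. hall_set n E W m X"
  proof (rule hall_set_exists[OF E W_sub X1_sub])
    show "\<forall>v\<in>{1..n}. card (nbr E v) \<le> k"
      using card_nbr_le_if_not_high_degree[OF E not_bad(1)] by blast
    show "card (poor_vertices n E X1) \<le> b - 1"
      using card_poor_vertices_less_if_not_many_poor[OF not_bad(2)] by linarith
  next
    fix U assume U: "U \<subseteq> {1..n} - X1" "\<forall>v\<in>U. 3 \<le> card (nbr E v \<inter> X1)"
      "4 \<le> card U" "real (card U) \<le> m"
    then have "card U \<le> M" using le_M_iff by simp
    then show "card U \<le> card ((\<Union>v\<in>U. nbr E v) \<inter> X1)"
      using card_le_nbr_if_not_contracting_rich_set[OF not_bad(3) X1_subset M_le_card_X1 U(1-3)]
      by simp
  next
    fix U assume U: "U \<subseteq> {1..n}" "U \<noteq> {}" "real (card U) \<le> m"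
    then have "card U \<le> M" using le_M_iff by simp
    moreover have "W - X1 \<subseteq> {1..n}" using W_sub by auto
    ultimately show "card U \<le> card ((\<Union>v\<in>U. nbr E v) \<inter> (W - X1))"
      using card_le_nbr_if_not_contracting_set[OF not_bad(4) _ M_le_card_rest U(1,2)] by simp
  qed (rule hall_size_bound)
  with no_hall show False by simp
qed

lemma card_X1_mult_p_le: "real (card X1) * p \<le> 70 * d"
proof -
  have "real (card X1) * p \<le> 7 * m * p"
    using card_X1_bounds p_pos by (intro mult_right_mono) auto
  then show ?thesis using m_mult_p ln_d_le ln_d_ge_1 by simp
qed

lemma poor_prob_small: "poor_prob p X1 \<le> 1 / d ^ 67"
proof -
  have fin: "finite X1" using X1_subset by (rule finite_subset) simp
  have "(7 * m - 3) * p \<le> (real (card X1) - 2) * p"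
    using card_X1_bounds p_pos by (intro mult_right_mono) auto
  moreover have "(7 * m - 3) * p = 70 * ln d - 3 * p" using m_mult_p by (simp add: algebra_simps)
  moreover have "real (card X1 - 2) = real (card X1) - 2"
    using card_X1_bounds m_ge_10 by (simp add: of_nat_diff)
  ultimately have exponent: "real 70 * ln d \<le> p * real (card X1 - 2) + 3"
    using p_le_1 by (simp add: mult.commute)
  have "1 \<le> real (card X1) * p"
    using \<open>(7 * m - 3) * p \<le> (real (card X1) - 2) * p\<close> \<open>(7 * m - 3) * p = 70 * ln d - 3 * p\<close>
      ln_d_ge_1 p_le_1 p_pos by (simp add: algebra_simps)
  then have "poor_prob p X1 \<le> 3 * (real (card X1) * p) ^ 2 * (1 - p) ^ (card X1 - 2)"
    using fin p_pos p_le_1 by (intro poor_prob_le) auto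
  also have "\<dots> \<le> 3 * (70 * d) ^ 2 * (27 * (1 / d ^ 70))"
  proof (rule mult_mono)
    show "3 * (real (card X1) * p) ^ 2 \<le> 3 * (70 * d) ^ 2"
      using card_X1_mult_p_le p_pos by (intro mult_left_mono power_mono) auto
    have "(1 - p) ^ (card X1 - 2) \<le> exp (- (p * real (card X1 - 2)))"
      using p_pos p_le_1 by (intro one_minus_power_le_exp) auto
    also have "\<dots> = exp 3 * exp (- (p * real (card X1 - 2) + 3))"
      by (simp flip: exp_add)
    also have "\<dots> \<le> 27 * (1 / d ^ 70)"
      using exp_le_3_power[of 3] exponent d_pos
      by (intro mult_mono exp_neg_le_inverse_power) auto
    finally show "(1 - p) ^ (card X1 - 2) \<le> 27 * (1 / d ^ 70)" .
  qed (use p_le_1 in auto)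
  also have "\<dots> = 396900 * d ^ 2 / d ^ 70" by (simp add: power2_eq_square)
  also have "\<dots> \<le> 1 / d ^ 67"
  proof -
    have "396900 * d ^ 69 \<le> d ^ 70" using d_ge by (intro mult_power_le_power) auto
    then have "396900 * d ^ 2 * d ^ 67 \<le> d ^ 70" by (simp add: mult.assoc flip: power_add)
    then show ?thesis using d_pos by (simp add: field_simps)
  qed
  finally show ?thesis .
qed

lemma gnp_prob_many_poor_small: "gnp_prob n p (many_poor n X1 b) \<le> 1 / real n ^ 4"
proof -
  let ?q = "poor_prob p X1"
  have q: "0 \<le> ?q" "?q \<le> 1 / d ^ 67"
    using poor_prob_small p_pos p_le_1 unfolding poor_prob_def by (auto intro!: sum_nonneg)
  have "real n / d ^ 3 \<le> real b" unfolding b_def by linarith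
  then have nb: "real n \<le> real b * d ^ 3" using d_pos by (simp add: field_simps)
  then have "0 < real b" using n_ge_1 d_pos by (smt (verit) mult_nonpos_nonneg zero_le_power)
  have "real (n choose b) * ?q ^ b \<le> (exp 1 * real n / real b) ^ b * ?q ^ b"
    using q by (intro mult_right_mono binomial_le_exp_power) auto
  also have "\<dots> = (exp 1 * real n / real b * ?q) ^ b" by (simp only: power_mult_distrib)
  also have "\<dots> \<le> (3 * d ^ 3 * (1 / d ^ 67)) ^ b"
  proof (intro power_mono mult_mono)
    have "real n / real b \<le> d ^ 3" using nb \<open>0 < real b\<close> by (simp add: divide_le_eq mult.commute)
    then have "exp 1 * (real n / real b) \<le> 3 * d ^ 3" using exp_le by (intro mult_mono) auto
    then show "exp 1 * real n / real b \<le> 3 * d ^ 3" by simp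
  qed (use q \<open>0 < real b\<close> d_pos in auto)
  also have "\<dots> \<le> (1 / d ^ 63) ^ b"
  proof (intro power_mono)
    have "3 * d ^ 66 \<le> d ^ 67" using d_ge by (intro mult_power_le_power) auto
    then have "3 * d ^ 3 * d ^ 63 \<le> d ^ 67" by (simp add: mult.assoc flip: power_add)
    then show "3 * d ^ 3 * (1 / d ^ 67) \<le> 1 / d ^ 63" using d_pos by (simp add: field_simps)
  qed (use d_pos in auto)
  also have "\<dots> \<le> 1 / real n ^ 4"
  proof -
    have "real b \<le> 2 ^ b" using less_exp[of b] by (metis of_nat_le_iff of_nat_numeral of_nat_power less_imp_le)
    also have "\<dots> \<le> d ^ b" using d_ge by (intro power_mono) auto
    finally have "real n \<le> d ^ (b + 3)" using nb d_pos by (simp add: power_add mult_right_mono order_trans)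
    then have "real n ^ 4 \<le> (d ^ (b + 3)) ^ 4" by (rule power_mono) simp
    also have "\<dots> = d ^ ((b + 3) * 4)" by (simp only: power_mult)
    also have "\<dots> \<le> d ^ (63 * b)" using d_ge \<open>0 < real b\<close> by (intro power_increasing) auto
    finally have "real n ^ 4 \<le> d ^ (63 * b)" .
    moreover have "(1 / d ^ 63) ^ b = 1 / d ^ (63 * b)" by (simp add: power_one_over power_mult)
    ultimately show ?thesis using n_ge_1 by (simp add: frac_le)
  qed
  finally show ?thesis
    using gnp_prob_many_poor_le[OF less_imp_le[OF p_pos] p_le_1 X1_subset, of b] by linarith
qed

lemma contracting_rich_term_le_power:
  assumes u: "0 < u" "u \<le> card X1" and gap: "6 * m \<le> real (card X1 - (u - 1))"
  shows "real (n choose u) * real (card X1 choose (u - 1)) * real ((u - 1) choose 3) ^ u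
      * p ^ (3 * u) * (1 - p) ^ (u * (card X1 - (u - 1)))
    \<le> (exp 1 ^ 2 * d * (real (card X1) * p) * (real u * p) / d ^ 60) ^ u"
proof -
  let ?s = "card X1"
  have "(1 - p) ^ (u * (?s - (u - 1))) \<le> exp (- (p * real (u * (?s - (u - 1)))))"
    using p_pos p_le_1 by (intro one_minus_power_le_exp) auto
  also have "\<dots> \<le> 1 / d ^ (60 * u)"
  proof (intro exp_neg_le_inverse_power d_pos)
    have "60 * ln d = 6 * m * p" using m_mult_p by (simp add: mult.assoc)
    also have "\<dots> \<le> real (?s - (u - 1)) * p" using gap p_pos by (intro mult_right_mono) auto
    finally have "real u * (60 * ln d) \<le> real u * (real (?s - (u - 1)) * p)"
      by (rule mult_left_mono) simp
    then show "real (60 * u) * ln d \<le> p * real (u * (?s - (u - 1)))"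
      unfolding of_nat_mult by (simp only: mult_ac of_nat_numeral)
  qed
  finally have decay: "(1 - p) ^ (u * (?s - (u - 1))) \<le> (1 / d ^ 60) ^ u"
    by (simp add: power_mult power_one_over)
  have choose3: "real ((u - 1) choose 3) ^ u \<le> (real u ^ 3) ^ u"
    using binomial_le_power[of "u - 1" 3] by (intro power_mono) (auto intro: order.trans power_mono)
  have "real (n choose u) * real (?s choose (u - 1)) * real ((u - 1) choose 3) ^ u
      * p ^ (3 * u) * (1 - p) ^ (u * (?s - (u - 1)))
    \<le> (exp 1 * real n / real u) ^ u * (exp 1 * real ?s / real u) ^ u * (real u ^ 3) ^ u
      * (p ^ 3) ^ u * (1 / d ^ 60) ^ u"
    using binomial_le_exp_power binomial_pred_le_exp_power[OF u(2)] choose3 decay p_pos p_le_1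
    by (intro mult_mono) (auto simp: power_mult)
  also have "\<dots> = (exp 1 * real n / real u * (exp 1 * real ?s / real u) * real u ^ 3
      * p ^ 3 * (1 / d ^ 60)) ^ u"
    by (simp only: power_mult_distrib)
  also have "exp 1 * real n / real u * (exp 1 * real ?s / real u) * real u ^ 3 * p ^ 3 * (1 / d ^ 60)
      = exp 1 ^ 2 * d * (real ?s * p) * (real u * p) / d ^ 60"
    using u by (simp add: d_def field_simps power2_eq_square eval_nat_numeral)
  finally show ?thesis .
qed

lemma rich_base_power_small:
  assumes A: "0 \<le> A" "A \<le> 630 * d ^ 2 * (real u * p) / d ^ 60" and u: "4 \<le> u" "real u \<le> m"
  shows "A ^ u \<le> 1 / real n ^ 4"
  \<comment> \<open>Small u gain from u p \<le> p ln n \<le> d^2/n, large u from the exponent u \<ge> ln n.\<close>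
proof (cases "real u \<le> ln (real n)")
  case True
  then have "real u * p \<le> d * p" using ln_n_le_d ln_n_large p_pos by (intro mult_right_mono) auto
  also have "\<dots> = d ^ 2 / real n" using n_ge_1 by (simp add: d_def power2_eq_square)
  finally have "630 * d ^ 2 * (real u * p) / d ^ 60 \<le> 630 * d ^ 2 * (d ^ 2 / real n) / d ^ 60"
    using d_pos by (intro divide_right_mono mult_left_mono) auto
  then have "A \<le> 630 * d ^ 2 * (d ^ 2 / real n) / d ^ 60" using A by linarith
  also have "\<dots> \<le> 1 / real n"
  proof -
    have "630 * d ^ 4 \<le> d ^ 60" using d_ge by (intro mult_power_le_power) auto
    then show ?thesis using d_pos n_ge_1 by (simp add: field_simps power2_eq_square eval_nat_numeral)
  qed
  finally show ?thesis using A n_ge_1 u by (intro power_le_inverse_power_if_le_inverse)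
next
  case False
  have "real u * p \<le> m * p" using u(2) p_pos by (intro mult_right_mono) auto
  then have "real u * p \<le> 10 * d" using m_mult_p ln_d_le ln_d_ge_1 by linarith
  then have "630 * d ^ 2 * (real u * p) / d ^ 60 \<le> 630 * d ^ 2 * (10 * d) / d ^ 60"
    using d_pos by (intro divide_right_mono mult_left_mono) auto
  then have "A \<le> 630 * d ^ 2 * (10 * d) / d ^ 60" using A by linarith
  also have "\<dots> \<le> exp (- real 4)"
  proof -
    have "510300 * d ^ 3 \<le> d ^ 60" using d_ge by (intro mult_power_le_power) auto
    then show ?thesis using exp_le_3_power[of 4] d_pos by (simp add: exp_minus field_simps eval_nat_numeral)
  qed
  finally show ?thesis using A False n_ge_1 by (intro power_le_inverse_power_if_le_exp) auto
qed

lemma contracting_rich_term_small: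
  assumes u: "4 \<le> u" "real u \<le> m"
  shows "real (n choose u) * real (card X1 choose (u - 1)) * real ((u - 1) choose 3) ^ u
      * p ^ (3 * u) * (1 - p) ^ (u * (card X1 - (u - 1))) \<le> 1 / real n ^ 4"
proof -
  define A where "A = exp 1 ^ 2 * d * (real (card X1) * p) * (real u * p) / d ^ 60"
  have "real (card X1 - (u - 1)) = real (card X1) - real u + 1"
    using u card_X1_bounds m_ge_10 by (simp add: of_nat_diff)
  then have "6 * m \<le> real (card X1 - (u - 1))" using u card_X1_bounds by linarith
  moreover have "u \<le> card X1" using u card_X1_bounds m_ge_10 by linarith
  ultimately have "real (n choose u) * real (card X1 choose (u - 1)) * real ((u - 1) choose 3) ^ u
      * p ^ (3 * u) * (1 - p) ^ (u * (card X1 - (u - 1))) \<le> A ^ u"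
    unfolding A_def using u by (intro contracting_rich_term_le_power) auto
  also have "A ^ u \<le> 1 / real n ^ 4"
  proof (rule rich_base_power_small[OF _ _ u])
    show "0 \<le> A" unfolding A_def using p_pos d_pos by simp
    have "exp 1 ^ 2 \<le> (3::real) ^ 2" using exp_le by (intro power_mono) auto
    then have "exp 1 ^ 2 * d \<le> 9 * d" using d_pos by (intro mult_right_mono) auto
    then have "exp 1 ^ 2 * d * (real (card X1) * p) \<le> 9 * d * (70 * d)"
      by (rule mult_mono[OF _ card_X1_mult_p_le]) (use d_pos p_pos in auto)
    then show "A \<le> 630 * d ^ 2 * (real u * p) / d ^ 60"
      unfolding A_def using p_pos
      by (intro divide_right_mono) (auto simp: power2_eq_square intro: mult_right_mono)
  qed
  finally show ?thesis .
qed


lemma gnp_prob_contracting_rich_set_small: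
  "gnp_prob n p (contracting_rich_set n X1 M) \<le> 1 / real n ^ 3"
  using gnp_prob_contracting_rich_set_le[OF less_imp_le[OF p_pos] p_le_1 X1_subset, of M]
proof (rule order.trans)
  show "(\<Sum>u\<in>{4..M}. real (n choose u) * real (card X1 choose (u - 1)) * real ((u - 1) choose 3) ^ u
      * p ^ (3 * u) * (1 - p) ^ (u * (card X1 - (u - 1)))) \<le> 1 / real n ^ 3"
    using contracting_rich_term_small le_M_iff by (intro sum_le_inverse_cube) auto
qed

lemma contracting_set_term_small:
  assumes u: "1 \<le> u" and c: "real n / 8 \<le> real c"
  shows "real (n choose u) * real (card (W - X1) choose (u - 1)) * (1 - p) ^ (u * c) \<le> 1 / real n ^ 4"
proof -
  have "card (W - X1) \<le> n" using W_sub card_mono[of "{1..n}" "W - X1"] by auto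
  then have "real (card (W - X1) choose (u - 1)) \<le> real n ^ (u - 1)"
    using binomial_le_power order.trans power_mono by (metis of_nat_0_le_iff of_nat_le_iff)
  also have "\<dots> \<le> real n ^ u" using n_ge_1 by (intro power_increasing) auto
  finally have binomials: "real (n choose u) * real (card (W - X1) choose (u - 1)) \<le> real n ^ u * real n ^ u"
    by (intro mult_mono binomial_le_power) auto
  have "(1 - p) ^ (u * c) \<le> exp (- (p * real (u * c)))"
    using p_pos p_le_1 by (intro one_minus_power_le_exp) auto
  also have "\<dots> \<le> exp (- (real u * (d / 8)))"
    using c p_pos mult_left_mono[OF mult_left_mono[OF c, of p], of "real u"] by (simp add: d_def mult_ac)
  also have "\<dots> = exp (- (d / 8)) ^ u" by (simp add: exp_of_nat_mult[symmetric])
  finally have decay: "(1 - p) ^ (u * c) \<le> exp (- (d / 8)) ^ u" .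
  have "exp (- (d / 8)) \<le> 1 / real n ^ 6"
    using ln_n_le_d ln_n_large n_ge_1 by (intro exp_neg_le_inverse_power) auto
  then have "real n ^ 2 * exp (- (d / 8)) \<le> real n ^ 2 * (1 / real n ^ 6)"
    by (intro mult_left_mono) auto
  also have "\<dots> = 1 / real n ^ 4" using n_ge_1 by (simp add: field_simps eval_nat_numeral)
  finally have base: "real n ^ 2 * exp (- (d / 8)) \<le> 1 / real n ^ 4" .
  have "real (n choose u) * real (card (W - X1) choose (u - 1)) * (1 - p) ^ (u * c)
      \<le> real n ^ u * real n ^ u * exp (- (d / 8)) ^ u"
    using p_le_1 by (intro mult_mono[OF binomials decay]) auto
  also have "\<dots> = (real n ^ 2 * exp (- (d / 8))) ^ u"
    by (simp add: power_mult_distrib power2_eq_square)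
  also have "\<dots> \<le> 1 / (real n ^ 4) ^ 1"
    using base n_ge_1 u by (intro power_le_inverse_power_if_le_inverse) auto
  finally show ?thesis by simp
qed

lemma gnp_prob_contracting_set_small: "gnp_prob n p (contracting_set n (W - X1) M) \<le> 1 / real n ^ 3"
proof -
  define c where "c = nat \<lceil>real n / 8\<rceil>"
  have c: "real n / 8 \<le> real c" "real c < real n / 8 + 1" unfolding c_def by linarith+
  have large: "c \<le> card (W - X1) - (u - 1) - u" if "u \<in> {1..M}" for u
  proof -
    have "real u \<le> m" using that le_M_iff by auto
    then have "real (c + 2 * u) \<le> real (card (W - X1) + 1)"
      using c card_rest m_le by simp
    then show ?thesis using that by (simp only: of_nat_le_iff) auto
  qed
  have "W - X1 \<subseteq> {1..n}" using W_sub by auto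
  from gnp_prob_contracting_set_le[OF less_imp_le[OF p_pos] p_le_1 this large]
  show ?thesis
  proof (rule order.trans)
    show "(\<Sum>u\<in>{1..M}. real (n choose u) * real (card (W - X1) choose (u - 1)) * (1 - p) ^ (u * c))
        \<le> 1 / real n ^ 3"
      using contracting_set_term_small c(1) by (intro sum_le_inverse_cube) auto
  qed
qed

lemma gnp_prob_no_hall_set_small:
  "1 - gnp_prob n p (\<lambda>E. \<exists>X. hall_set n E W m X) \<le> 4 / real n ^ 3"
proof -
  have p: "0 \<le> p" "p \<le> 1" using p_pos p_le_1 by auto
  have "1 - gnp_prob n p (\<lambda>E. \<exists>X. hall_set n E W m X)
      = gnp_prob n p (\<lambda>E. \<not> (\<exists>X. hall_set n E W m X))" by (rule gnp_prob_not)
  also have "\<dots> \<le> gnp_prob n p (\<lambda>E. (high_degree n k E \<or> many_poor n X1 b E) \<or>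
      (contracting_rich_set n X1 M E \<or> contracting_set n (W - X1) M E))"
    using bad_event_if_no_hall_set by (intro gnp_prob_mono[OF p]) auto
  also have "\<dots> \<le> gnp_prob n p (\<lambda>E. high_degree n k E \<or> many_poor n X1 b E)
      + gnp_prob n p (\<lambda>E. contracting_rich_set n X1 M E \<or> contracting_set n (W - X1) M E)"
    by (rule gnp_prob_disj_le[OF p])
  also have "\<dots> \<le> (gnp_prob n p (high_degree n k) + gnp_prob n p (many_poor n X1 b))
      + (gnp_prob n p (contracting_rich_set n X1 M) + gnp_prob n p (contracting_set n (W - X1) M))"
    by (intro add_mono gnp_prob_disj_le[OF p])
  also have "\<dots> \<le> (1 / real n ^ 4 + 1 / real n ^ 4) + (1 / real n ^ 3 + 1 / real n ^ 3)"
    using gnp_prob_high_degree_small gnp_prob_many_poor_small gnp_prob_contracting_rich_set_small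
      gnp_prob_contracting_set_small by (intro add_mono)
  also have "\<dots> \<le> 4 / real n ^ 3"
    using n_ge_1 by (simp add: field_simps eval_nat_numeral)
  finally show ?thesis .
qed

end

lemma gnp_prob_no_hall_set_le:
  fixes n :: nat and p :: real and W :: "nat set"
  assumes "p \<le> 1" "10^4 * ln (real n) \<le> real n * p" "10^4 \<le> ln (real n)"
    and W: "W \<subseteq> {1..n}" "3 * real n / 8 \<le> real (card W)"
  shows "1 - gnp_prob n p (\<lambda>E. \<exists>X. hall_set n E W (10 * ln (real n * p) / p) X) \<le> 4 / real n ^ 3"
proof -
  interpret gnp_regime n p using assms by unfold_locales
  have "nat \<lfloor>7 * m\<rfloor> \<le> card W" using m_le m_ge_10 W(2) n_ge_1 by linarith
  then obtain X1 where "X1 \<subseteq> W" "card X1 = nat \<lfloor>7 * m\<rfloor>" by (rule obtain_subset_with_card_n)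
  then interpret gnp_core n p W X1 using W by unfold_locales
  show ?thesis using gnp_prob_no_hall_set_small unfolding m_def d_def .
qed

theorem proposition3p42:
  fixes p :: "nat \<Rightarrow> real" and W :: "nat \<Rightarrow> nat set"
  assumes p_prob: "\<And>n. 0 \<le> p n \<and> p n \<le> 1"
    and p_large: "eventually (\<lambda>n. real n * p n \<ge> 10^4 * ln (real n)) sequentially"
    and W_sub: "eventually (\<lambda>n. W n \<subseteq> {1..n} \<and> real (card (W n)) \<ge> 3 * real n / 8) sequentially"
  shows "(\<lambda>n. 1 - gnp_prob n (p n)
            (\<lambda>E. let m = 10 * ln (real n * p n) / p n in
               \<exists>X. X \<subseteq> W n \<and> real (card X) \<le> 8 * m \<and>
                 (\<forall>U. U \<subseteq> {1..n} - X \<and> real (card U) \<le> m \<longrightarrow>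
                      card (nbr_in E U X) \<ge> card U)))
         \<in> o(\<lambda>n. real n powr (-2))"
proof -
  define f where "f n = 1 - gnp_prob n (p n) (\<lambda>E. \<exists>X. hall_set n E (W n) (10 * ln (real n * p n) / p n) X)"
    for n
  have "eventually (\<lambda>n. 10^4 \<le> ln (real n)) sequentially" by real_asymp
  then have "eventually (\<lambda>n. norm (f n) \<le> 4 * norm (real n powr (-3))) sequentially"
    using p_large W_sub
  proof eventually_elim
    case (elim n)
    then have "f n \<le> 4 / real n ^ 3"
      unfolding f_def using p_prob by (intro gnp_prob_no_hall_set_le) auto
    moreover have "0 \<le> f n" unfolding f_def gnp_prob_not using p_prob by (intro gnp_prob_nonneg) auto
    moreover have "0 < real n" using elim(1) by (cases "n = 0") auto
    ultimately show ?case by (simp add: powr_minus powr_realpow divide_inverse)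
  qed
  then have "f \<in> O(\<lambda>n. real n powr (-3))" by (rule bigoI)
  also have "(\<lambda>n. real n powr (-3)) \<in> o(\<lambda>n. real n powr (-2))" by real_asymp
  finally show ?thesis unfolding f_def hall_set_def Let_def .
qed

end
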